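(* For every integer $k \geq 2$ there exists a $\chi_\rho$-critical tree $T$ with $\chi_{\rho}(T)=k$.
   Context: A $k$-packing coloring of a graph $G$ is a map $c:V(G)\to\{1,\ldots,k\}$ such that two distinct vertices $u,v$ with $c(u)=c(v)=i$ satisfy $d_G(u,v)>i$; $\chi_\rho(G)$ is the smallest $k$ for which such a coloring exists. $G$ is $\chi_\rho$-critical if $\chi_\rho(H)<\chi_\rho(G)$ for every proper subgraph $H$ of $G$. *)

theory Defs
  imports Main
begin

definition graph :: "'a set \<Rightarrow> 'a set set \<Rightarrow> bool" where
  "graph V E \<longleftrightarrow> (\<forall>e\<in>E. \<exists>u v. u \<noteq> v \<and> u \<in> V \<and> v \<in> V \<and> e = {u, v})"

definition adj :: "'a set set \<Rightarrow> 'a \<Rightarrow> 'a \<Rightarrow> bool" where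
  "adj E u v \<longleftrightarrow> {u, v} \<in> E"

text \<open>A walk, given as the list of its vertices; its length is the number of edges.\<close>
definition is_walk :: "'a set \<Rightarrow> 'a set set \<Rightarrow> 'a list \<Rightarrow> bool" where
  "is_walk V E p \<longleftrightarrow> p \<noteq> [] \<and> set p \<subseteq> V \<and>
     (\<forall>i. Suc i < length p \<longrightarrow> adj E (p ! i) (p ! Suc i))"

definition dist_le :: "'a set \<Rightarrow> 'a set set \<Rightarrow> 'a \<Rightarrow> 'a \<Rightarrow> nat \<Rightarrow> bool" where
  "dist_le V E u v n \<longleftrightarrow>
     (\<exists>p. is_walk V E p \<and> hd p = u \<and> last p = v \<and> length p \<le> Suc n)"

definition connected_graph :: "'a set \<Rightarrow> 'a set set \<Rightarrow> bool" where
  "connected_graph V E \<longleftrightarrow> (\<forall>u\<in>V. \<forall>v\<in>V. \<exists>n. dist_le V E u v n)"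

definition is_cycle :: "'a set \<Rightarrow> 'a set set \<Rightarrow> 'a list \<Rightarrow> bool" where
  "is_cycle V E p \<longleftrightarrow> length p \<ge> 3 \<and> distinct p \<and> is_walk V E p \<and>
     adj E (last p) (hd p)"

definition acyclic_graph :: "'a set \<Rightarrow> 'a set set \<Rightarrow> bool" where
  "acyclic_graph V E \<longleftrightarrow> (\<nexists>p. is_cycle V E p)"

definition tree :: "'a set \<Rightarrow> 'a set set \<Rightarrow> bool" where
  "tree V E \<longleftrightarrow> graph V E \<and> finite V \<and> V \<noteq> {} \<and> connected_graph V E \<and> acyclic_graph V E"

definition packing_coloring :: "'a set \<Rightarrow> 'a set set \<Rightarrow> nat \<Rightarrow> ('a \<Rightarrow> nat) \<Rightarrow> bool" where
  "packing_coloring V E k c \<longleftrightarrow>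
     (\<forall>v\<in>V. c v \<in> {1..k}) \<and>
     (\<forall>u\<in>V. \<forall>v\<in>V. u \<noteq> v \<and> c u = c v \<longrightarrow> \<not> dist_le V E u v (c u))"

definition packing_chromatic :: "'a set \<Rightarrow> 'a set set \<Rightarrow> nat" where
  "packing_chromatic V E = (LEAST k. \<exists>c. packing_coloring V E k c)"

definition subgraph :: "'a set \<Rightarrow> 'a set set \<Rightarrow> 'a set \<Rightarrow> 'a set set \<Rightarrow> bool" where
  "subgraph V' E' V E \<longleftrightarrow> graph V' E' \<and> V' \<subseteq> V \<and> E' \<subseteq> E"

definition packing_critical :: "'a set \<Rightarrow> 'a set set \<Rightarrow> bool" where
  "packing_critical V E \<longleftrightarrow>
     (\<forall>V' E'. subgraph V' E' V E \<and> (V', E') \<noteq> (V, E) \<longrightarrow>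
        packing_chromatic V' E' < packing_chromatic V E)"

end

theory Submission
  imports Defs
begin

text \<open>Let T be the complete (k-1)-ary tree of depth 2. Colouring the children of the root
  with 2, ..., k and all other vertices with 1 is a packing colouring. Conversely, if some
  child of the root has colour 1, its k-1 children are pairwise at distance 2 and need
  distinct colours other than 1; otherwise the k-1 children of the root do. Hence T has
  packing chromatic number k, and a minimal subgraph of T with packing chromatic number k
  is critical. It is connected, since packing colourings of two parts at infinite distance
  from each other can be combined, so it is again a tree.\<close>

lemma adj_commute: "adj E u v \<longleftrightarrow> adj E v u"
  by (simp add: adj_def insert_commute)

lemma is_walk_singleton [simp]: "is_walk V E [a] \<longleftrightarrow> a \<in> V"
  by (simp add: is_walk_def)

lemma is_walk_Cons_Cons [simp]:
  "is_walk V E (a # b # p) \<longleftrightarrow> a \<in> V \<and> adj E a b \<and> is_walk V E (b # p)"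
  unfolding is_walk_def by (auto simp: less_Suc_eq_0_disj all_conj_distrib)

lemma is_walk_imp_set: "is_walk V E p \<Longrightarrow> set p \<subseteq> V"
  by (simp add: is_walk_def)

lemma is_walk_append:
  "is_walk V E p \<Longrightarrow> is_walk V E q \<Longrightarrow> last p = hd q \<Longrightarrow> is_walk V E (p @ tl q)"
proof (induction p rule: induct_list012)
  case (2 x)
  then show ?case by (cases q) auto
next
  case (3 x y p)
  then show ?case by simp
qed (simp add: is_walk_def)

lemma is_walk_rev: "is_walk V E p \<Longrightarrow> is_walk V E (rev p)"
proof (induction p rule: induct_list012)
  case (3 x y p)
  moreover have "is_walk V E [y, x]"
    using 3 by (auto simp: adj_commute is_walk_def)
  ultimately have "is_walk V E (rev (y # p) @ tl [y, x])"
    by (intro is_walk_append) auto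
  then show ?case by simp
qed simp_all

lemma is_walk_mono: "is_walk V' E' p \<Longrightarrow> V' \<subseteq> V \<Longrightarrow> E' \<subseteq> E \<Longrightarrow> is_walk V E p"
  unfolding is_walk_def adj_def by blast

lemma dist_le_refl: "u \<in> V \<Longrightarrow> dist_le V E u u 0"
  unfolding dist_le_def by (intro exI[of _ "[u]"]) simp

lemma dist_le_adj: "u \<in> V \<Longrightarrow> v \<in> V \<Longrightarrow> adj E u v \<Longrightarrow> dist_le V E u v 1"
  unfolding dist_le_def by (intro exI[of _ "[u, v]"]) simp

lemma dist_le_imp_mem: "dist_le V E u v n \<Longrightarrow> u \<in> V \<and> v \<in> V"
  unfolding dist_le_def is_walk_def by (metis hd_in_set last_in_set subsetD)

lemma dist_le_mono: "dist_le V E u v n \<Longrightarrow> n \<le> m \<Longrightarrow> dist_le V E u v m"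
  unfolding dist_le_def by fastforce

lemma dist_le_subgraph_mono:
  "dist_le V' E' u v n \<Longrightarrow> V' \<subseteq> V \<Longrightarrow> E' \<subseteq> E \<Longrightarrow> dist_le V E u v n"
  unfolding dist_le_def using is_walk_mono by blast

lemma dist_le_sym: "dist_le V E u v n \<Longrightarrow> dist_le V E v u n"
  unfolding dist_le_def by (metis hd_rev last_rev length_rev is_walk_rev)

lemma dist_le_trans:
  assumes "dist_le V E u w m" and "dist_le V E w v n"
  shows "dist_le V E u v (m + n)"
proof -
  obtain p q where p: "is_walk V E p" "hd p = u" "last p = w" "length p \<le> Suc m"
    and q: "is_walk V E q" "hd q = w" "last q = v" "length q \<le> Suc n"
    using assms unfolding dist_le_def by blast
  then obtain b q' where q': "q = b # q'" by (cases q) (auto simp: is_walk_def)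
  have "is_walk V E (p @ q')"
    using is_walk_append[OF p(1) q(1)] p(3) q(2) q' by simp
  moreover have "hd (p @ q') = u" "last (p @ q') = v"
    using p(1,2) q(3) q' p(3) q(2) by (auto simp: is_walk_def)
  moreover have "length (p @ q') \<le> Suc (m + n)"
    using p(4) q(4) q' by simp
  ultimately show ?thesis
    unfolding dist_le_def by blast
qed

lemma dist_le_adj_adj:
  "u \<in> V \<Longrightarrow> w \<in> V \<Longrightarrow> v \<in> V \<Longrightarrow> adj E u w \<Longrightarrow> adj E w v \<Longrightarrow> dist_le V E u v 2"
  using dist_le_trans[OF dist_le_adj dist_le_adj, of u V w E v] by (simp add: numeral_2_eq_2)

lemma dist_le_1D: "dist_le V E u v 1 \<Longrightarrow> u = v \<or> adj E u v"
  unfolding dist_le_def is_walk_def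
  by (auto simp: Suc_le_length_iff le_Suc_eq length_Suc_conv)

lemma packing_coloring_mono:
  "packing_coloring V E k c \<Longrightarrow> k \<le> k' \<Longrightarrow> packing_coloring V E k' c"
  unfolding packing_coloring_def by auto

lemma packing_coloring_subgraph:
  assumes "packing_coloring V E k c" "V' \<subseteq> V" "E' \<subseteq> E"
  shows "packing_coloring V' E' k c"
  unfolding packing_coloring_def
proof (intro conjI ballI impI notI)
  fix v assume "v \<in> V'"
  then show "c v \<in> {1..k}" using assms unfolding packing_coloring_def by blast
next
  fix u v assume "u \<in> V'" "v \<in> V'" "u \<noteq> v \<and> c u = c v" "dist_le V' E' u v (c u)"
  then show False
    using assms dist_le_subgraph_mono[of V' E' u v "c u" V E] unfolding packing_coloring_def by blast
qed

lemma packing_coloring_card: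
  assumes "finite V"
  shows "\<exists>c. packing_coloring V E (card V) c"
proof -
  obtain g where g: "bij_betw g V {0..<card V}"
    using ex_bij_betw_finite_nat[OF assms] by blast
  then have "packing_coloring V E (card V) (\<lambda>x. Suc (g x))"
    using bij_betwE[OF g] bij_betw_imp_inj_on[OF g]
    unfolding packing_coloring_def inj_on_def by (auto simp: Suc_le_eq)
  then show ?thesis by blast
qed

lemma packing_chromatic_le: "packing_coloring V E k c \<Longrightarrow> packing_chromatic V E \<le> k"
  unfolding packing_chromatic_def by (rule Least_le) blast

lemma packing_coloring_packing_chromatic:
  "finite V \<Longrightarrow> \<exists>c. packing_coloring V E (packing_chromatic V E) c"
  unfolding packing_chromatic_def by (rule LeastI_ex) (use packing_coloring_card in blast)

lemma packing_chromatic_empty: "packing_chromatic {} E = 0"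
  using packing_chromatic_le[of "{}" E 0 "\<lambda>_. 1"] by (simp add: packing_coloring_def)

lemma packing_chromatic_subgraph_le:
  assumes "finite V" "subgraph V' E' V E"
  shows "packing_chromatic V' E' \<le> packing_chromatic V E"
proof -
  obtain c where "packing_coloring V E (packing_chromatic V E) c"
    using packing_coloring_packing_chromatic[OF assms(1)] by blast
  then have "packing_coloring V' E' (packing_chromatic V E) c"
    using assms(2) packing_coloring_subgraph unfolding subgraph_def by blast
  then show ?thesis by (rule packing_chromatic_le)
qed

lemma packing_coloring_adj_colour_1:
  assumes "packing_coloring V E k c" "x \<in> V" "y \<in> V" "x \<noteq> y" "adj E x y" "c y = 1"
  shows "c x \<noteq> 1"
  using assms dist_le_adj[of x V y E] unfolding packing_coloring_def by metis

lemma packing_coloring_card_neighbours_le: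
  assumes c: "packing_coloring V E k c" and "w \<in> V" "S \<subseteq> V"
    and S: "\<forall>x\<in>S. adj E x w \<and> c x \<noteq> 1"
  shows "card S \<le> k - 1"
proof -
  have colours: "c x \<in> {2..k}" if "x \<in> S" for x
  proof -
    have "c x \<in> {1..k}" using c \<open>S \<subseteq> V\<close> that unfolding packing_coloring_def by blast
    then show ?thesis using S that by force
  qed
  have "inj_on c S"
  proof (rule inj_onI, rule ccontr)
    fix x y assume xy: "x \<in> S" "y \<in> S" "c x = c y" "x \<noteq> y"
    have "adj E x w" "adj E y w" using S xy by auto
    then have "adj E x w" "adj E w y" using adj_commute by metis+
    then have "dist_le V E x y 2" using xy \<open>w \<in> V\<close> \<open>S \<subseteq> V\<close> by (intro dist_le_adj_adj) auto
    moreover have "2 \<le> c x" using colours[OF \<open>x \<in> S\<close>] by simp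
    ultimately have "dist_le V E x y (c x)" by (rule dist_le_mono)
    then show False
      using c xy \<open>S \<subseteq> V\<close> unfolding packing_coloring_def by blast
  qed
  then have "card S = card (c ` S)" by (simp add: card_image)
  also have "\<dots> \<le> card {2..k}" using colours by (intro card_mono) blast+
  finally show ?thesis by simp
qed

definition adj_closed :: "'a set \<Rightarrow> 'a set set \<Rightarrow> 'a set \<Rightarrow> bool" where
  "adj_closed V E X \<longleftrightarrow> (\<forall>a\<in>V \<inter> X. \<forall>b\<in>V. adj E a b \<longrightarrow> b \<in> X)"

lemma adj_closed_Compl: "adj_closed V E X \<Longrightarrow> adj_closed V E (- X)"
  unfolding adj_closed_def
proof (intro ballI impI)
  fix a b assume "\<forall>a\<in>V \<inter> X. \<forall>b\<in>V. adj E a b \<longrightarrow> b \<in> X" "a \<in> V \<inter> - X" "b \<in> V" "adj E a b"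
  then show "b \<in> - X" using adj_commute[of E a b] by blast
qed

lemma adj_closed_reachable: "adj_closed V E {x. \<exists>n. dist_le V E u x n}"
  unfolding adj_closed_def
proof (intro ballI impI)
  fix a b assume a: "a \<in> V \<inter> {x. \<exists>n. dist_le V E u x n}" and "b \<in> V" "adj E a b"
  then obtain n where "dist_le V E u a n" by blast
  moreover have "dist_le V E a b 1"
    using a \<open>b \<in> V\<close> \<open>adj E a b\<close> by (intro dist_le_adj) auto
  ultimately have "dist_le V E u b (n + 1)" by (rule dist_le_trans)
  then show "b \<in> {x. \<exists>n. dist_le V E u x n}" by blast
qed

lemma graph_induced:
  assumes "graph V E"
  shows "graph (V \<inter> X) {e\<in>E. e \<subseteq> X}"
  unfolding graph_def
proof
  fix e assume "e \<in> {e\<in>E. e \<subseteq> X}"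
  then obtain u v where "u \<noteq> v" "u \<in> V" "v \<in> V" "e = {u, v}" "e \<subseteq> X"
    using assms unfolding graph_def by (metis (no_types, lifting) mem_Collect_eq)
  then show "\<exists>u v. u \<noteq> v \<and> u \<in> V \<inter> X \<and> v \<in> V \<inter> X \<and> e = {u, v}"
    by (intro exI[of _ u] exI[of _ v]) auto
qed

lemma subgraph_induced: "graph V E \<Longrightarrow> subgraph (V \<inter> X) {e\<in>E. e \<subseteq> X} V E"
  unfolding subgraph_def using graph_induced by blast

lemma is_walk_induced:
  "is_walk V E p \<Longrightarrow> hd p \<in> X \<Longrightarrow> adj_closed V E X \<Longrightarrow> is_walk (V \<inter> X) {e\<in>E. e \<subseteq> X} p"
proof (induction p rule: induct_list012)
  case (3 x y p)
  then have "y \<in> X"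
    unfolding adj_closed_def
    by (metis IntI is_walk_Cons_Cons is_walk_imp_set list.sel(1) list.set_intros(1) subsetD)
  with 3 show ?case by (auto simp: adj_def)
qed (auto simp: is_walk_def)

lemma dist_le_induced:
  "dist_le V E u v n \<Longrightarrow> u \<in> X \<Longrightarrow> adj_closed V E X \<Longrightarrow> dist_le (V \<inter> X) {e\<in>E. e \<subseteq> X} u v n"
  unfolding dist_le_def using is_walk_induced by blast

lemma packing_coloring_combine:
  assumes X: "adj_closed V E X"
    and c1: "packing_coloring (V \<inter> X) {e\<in>E. e \<subseteq> X} k c1"
    and c2: "packing_coloring (V \<inter> - X) {e\<in>E. e \<subseteq> - X} k c2"
  shows "packing_coloring V E k (\<lambda>x. if x \<in> X then c1 x else c2 x)" (is "packing_coloring V E k ?c")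
proof -
  have far: "\<not> dist_le V E u v (?c u)"
    if "adj_closed V E Y" "packing_coloring (V \<inter> Y) {e\<in>E. e \<subseteq> Y} k c'"
      and "\<forall>x\<in>Y. ?c x = c' x" "u \<in> V \<inter> Y" "u \<noteq> v" "?c u = ?c v"
    for Y c' u v
  proof
    assume "dist_le V E u v (?c u)"
    then have "dist_le (V \<inter> Y) {e\<in>E. e \<subseteq> Y} u v (c' u)"
      using that dist_le_induced by fastforce
    moreover from this have "v \<in> V \<inter> Y" by (blast dest: dist_le_imp_mem)
    ultimately show False
      using that unfolding packing_coloring_def by auto
  qed
  show ?thesis
    unfolding packing_coloring_def
  proof (intro conjI ballI impI)
    fix x assume "x \<in> V"
    then show "?c x \<in> {1..k}"
      using c1 c2 unfolding packing_coloring_def by auto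
  next
    fix u v assume "u \<in> V" "v \<in> V" "u \<noteq> v \<and> ?c u = ?c v"
    then show "\<not> dist_le V E u v (?c u)"
      using far[OF X c1] far[OF adj_closed_Compl[OF X] c2] by (cases "u \<in> X") auto
  qed
qed

lemma packing_critical_imp_connected:
  assumes fin: "finite V" and G: "graph V E" and crit: "packing_critical V E"
  shows "connected_graph V E"
  unfolding connected_graph_def
proof (intro ballI, rule ccontr)
  fix u v assume uv: "u \<in> V" "v \<in> V" "\<nexists>n. dist_le V E u v n"
  define K where "K = packing_chromatic V E"
  define X where "X = {x. \<exists>n. dist_le V E u x n}"
  have X: "adj_closed V E X" unfolding X_def by (rule adj_closed_reachable)
  have "u \<in> X" using dist_le_refl[OF uv(1)] unfolding X_def by blast
  have "v \<notin> X" using uv(3) unfolding X_def by blast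
  have less: "packing_chromatic (V \<inter> Y) {e\<in>E. e \<subseteq> Y} < K" if "V \<inter> Y \<noteq> V" for Y
    using crit subgraph_induced[OF G, of Y] that unfolding packing_critical_def K_def by simp
  have colouring: "\<exists>c. packing_coloring (V \<inter> Y) {e\<in>E. e \<subseteq> Y} (K - 1) c"
    if "V \<inter> Y \<noteq> V" for Y
  proof -
    obtain c where
      "packing_coloring (V \<inter> Y) {e\<in>E. e \<subseteq> Y} (packing_chromatic (V \<inter> Y) {e\<in>E. e \<subseteq> Y}) c"
      using packing_coloring_packing_chromatic[of "V \<inter> Y"] fin by blast
    then have "packing_coloring (V \<inter> Y) {e\<in>E. e \<subseteq> Y} (K - 1) c"
      by (rule packing_coloring_mono) (use less[OF that] in linarith)
    then show ?thesis by blast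
  qed
  have "V \<inter> X \<noteq> V" "V \<inter> - X \<noteq> V" using uv \<open>u \<in> X\<close> \<open>v \<notin> X\<close> by auto
  then obtain c1 c2
    where "packing_coloring (V \<inter> X) {e\<in>E. e \<subseteq> X} (K - 1) c1"
      and "packing_coloring (V \<inter> - X) {e\<in>E. e \<subseteq> - X} (K - 1) c2"
    using colouring by meson
  then have "K \<le> K - 1"
    unfolding K_def by (intro packing_chromatic_le[OF packing_coloring_combine[OF X]])
  moreover have "K > 0" using less[OF \<open>V \<inter> X \<noteq> V\<close>] by simp
  ultimately show False by linarith
qed

lemma subgraph_trans: "subgraph V1 E1 V2 E2 \<Longrightarrow> subgraph V2 E2 V3 E3 \<Longrightarrow> subgraph V1 E1 V3 E3"
  unfolding subgraph_def by blast

lemma graph_finite_edges: "graph V E \<Longrightarrow> finite V \<Longrightarrow> finite E"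
proof -
  assume G: "graph V E" and "finite V"
  have "E \<subseteq> Pow V"
  proof
    fix e assume "e \<in> E"
    then obtain u v where "u \<in> V" "v \<in> V" "e = {u, v}" using G unfolding graph_def by meson
    then show "e \<in> Pow V" by simp
  qed
  then show "finite E" using \<open>finite V\<close> finite_subset by blast
qed

lemma subgraph_card_less:
  assumes "finite V" "graph V E" "subgraph V' E' V E" "(V', E') \<noteq> (V, E)"
  shows "card V' + card E' < card V + card E"
proof -
  have "V' \<subseteq> V" "E' \<subseteq> E" "finite E"
    using assms graph_finite_edges unfolding subgraph_def by auto
  then have "card V' \<le> card V" "card E' \<le> card E"
    "V' \<subset> V \<Longrightarrow> card V' < card V" "E' \<subset> E \<Longrightarrow> card E' < card E"
    using assms(1) by (auto intro: card_mono psubset_card_mono)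
  then show ?thesis
    using assms(4) \<open>V' \<subseteq> V\<close> \<open>E' \<subseteq> E\<close> by fastforce
qed

lemma exists_packing_critical_subgraph:
  assumes "finite V" "graph V E"
  shows "\<exists>V' E'. subgraph V' E' V E \<and> packing_critical V' E' \<and>
           packing_chromatic V' E' = packing_chromatic V E"
  using assms
proof (induction "card V + card E" arbitrary: V E rule: less_induct)
  case less
  show ?case
  proof (cases "packing_critical V E")
    case True
    then show ?thesis using less.prems unfolding subgraph_def by blast
  next
    case False
    then obtain V' E' where sub: "subgraph V' E' V E" "(V', E') \<noteq> (V, E)"
      and "packing_chromatic V E \<le> packing_chromatic V' E'"
      unfolding packing_critical_def by (auto simp: not_less)
    then have "packing_chromatic V' E' = packing_chromatic V E"
      using packing_chromatic_subgraph_le less.prems by fastforce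
    moreover have "finite V'" "graph V' E'"
      using sub less.prems finite_subset unfolding subgraph_def by auto
    ultimately show ?thesis
      using less.hyps[OF subgraph_card_less[OF less.prems sub]] subgraph_trans[OF _ sub(1)]
      by metis
  qed
qed

lemma is_cycle_adj_next:
  assumes "is_cycle V E p" "i < length p"
  shows "adj E (p ! i) (p ! (Suc i mod length p))"
proof (cases "Suc i < length p")
  case True
  then show ?thesis using assms unfolding is_cycle_def is_walk_def by simp
next
  case False
  have "p \<noteq> []" "i = length p - 1" using False assms(2) by auto
  then have "p ! i = last p" "p ! 0 = hd p" by (simp_all add: last_conv_nth hd_conv_nth)
  moreover have "Suc i = length p" using False assms(2) by linarith
  ultimately show ?thesis
    using assms(1) unfolding is_cycle_def by simp
qed

text \<open>If every vertex has at most one neighbour of no larger height, namely its parent,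
  the graph is acyclic: a vertex of maximal height on a cycle has two such neighbours.\<close>
lemma acyclic_graph_if_parent:
  fixes height :: "'a \<Rightarrow> nat"
  assumes "\<And>x y. adj E x y \<Longrightarrow> height y \<le> height x \<Longrightarrow> y = parent x"
  shows "acyclic_graph V E"
  unfolding acyclic_graph_def
proof
  assume "\<exists>p. is_cycle V E p"
  then obtain p where p: "is_cycle V E p" by blast
  define n where "n = length p"
  have "n \<ge> 3" "distinct p" using p unfolding is_cycle_def n_def by auto
  have "Max (height ` set p) \<in> height ` set p"
    using \<open>n \<ge> 3\<close> unfolding n_def by (intro Max_in) auto
  then obtain i where "i < n" "height (p ! i) = Max (height ` set p)"
    unfolding n_def by (auto simp: in_set_conv_nth)
  then have i: "i < n" "\<forall>j<n. height (p ! j) \<le> height (p ! i)"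
    unfolding n_def by auto
  have succ_adj: "\<And>j. j < n \<Longrightarrow> adj E (p ! j) (p ! (Suc j mod n))"
    using is_cycle_adj_next[OF p] unfolding n_def .
  define j where "j = (if i = 0 then n - 1 else i - 1)"
  have "j < n" "Suc j mod n = i" using i(1) unfolding j_def by auto
  then have "adj E (p ! i) (p ! j)" using succ_adj[of j] by (metis adj_commute)
  then have "p ! j = parent (p ! i)" using assms i(2) \<open>j < n\<close> by blast
  moreover have "p ! (Suc i mod n) = parent (p ! i)"
    using assms succ_adj[OF i(1)] i(2) \<open>n \<ge> 3\<close> by simp
  moreover have "Suc i mod n < n" using \<open>n \<ge> 3\<close> by simp
  ultimately have "j = Suc i mod n"
    using nth_eq_iff_index_eq[OF \<open>distinct p\<close>] \<open>j < n\<close> unfolding n_def by metis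
  then show False
    using i(1) \<open>n \<ge> 3\<close> unfolding j_def by (cases "Suc i = n") (auto split: if_splits)
qed

lemma acyclic_graph_subgraph: "acyclic_graph V E \<Longrightarrow> subgraph V' E' V E \<Longrightarrow> acyclic_graph V' E'"
  unfolding acyclic_graph_def is_cycle_def subgraph_def adj_def using is_walk_mono by blast

lemma tree_packing_critical_subgraph:
  assumes "tree V E" "subgraph V' E' V E" "packing_critical V' E'" "V' \<noteq> {}"
  shows "tree V' E'"
proof -
  have "finite V'" "graph V' E'"
    using assms finite_subset unfolding tree_def subgraph_def by auto
  then show ?thesis
    using assms packing_critical_imp_connected acyclic_graph_subgraph unfolding tree_def by blast
qed

text \<open>The complete (k-1)-ary tree of depth 2 on natural numbers: the root is 0, its
  children are 1, ..., k-1, and the children of j are j * k + i for i < k - 1.\<close>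

definition depth2_parent :: "nat \<Rightarrow> nat \<Rightarrow> nat" where
  "depth2_parent k v = (if v < k then 0 else v div k)"

definition depth2_vertices :: "nat \<Rightarrow> nat set" where
  "depth2_vertices k = {..<k} \<union> {j * k + i | j i. j \<in> {1..<k} \<and> i < k - 1}"

definition depth2_edges :: "nat \<Rightarrow> nat set set" where
  "depth2_edges k = (\<lambda>v. {v, depth2_parent k v}) ` (depth2_vertices k - {0})"

lemma depth2_vertices_cases:
  assumes "v \<in> depth2_vertices k"
  obtains "v = 0" | "v \<in> {1..<k}" | j i where "j \<in> {1..<k}" "i < k - 1" "v = j * k + i"
  using assms unfolding depth2_vertices_def by fastforce

lemma depth2_leaf:
  assumes "j \<in> {1..<k}" "i < k - 1"
  shows "j * k + i \<in> depth2_vertices k" "k \<le> j * k + i" "depth2_parent k (j * k + i) = j"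
proof -
  show "j * k + i \<in> depth2_vertices k" using assms unfolding depth2_vertices_def by blast
  have "k \<le> j * k" using assms(1) by simp
  then show "k \<le> j * k + i" by linarith
  then show "depth2_parent k (j * k + i) = j" using assms unfolding depth2_parent_def by simp
qed

lemma depth2_parent_child:
  assumes "v \<in> depth2_vertices k - {0}"
  shows "v \<in> {1..<k} \<and> depth2_parent k v = 0 \<or> k \<le> v \<and> depth2_parent k v \<in> {1..<k}"
proof -
  have "v \<in> depth2_vertices k" "v \<noteq> 0" using assms by auto
  then show ?thesis
  proof (cases rule: depth2_vertices_cases)
    case (3 j i)
    then show ?thesis using depth2_leaf[OF 3(1,2)] by simp
  qed (simp_all add: depth2_parent_def)
qed

lemma adj_depth2_iff:
  "adj (depth2_edges k) x y \<longleftrightarrow>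
     x \<in> depth2_vertices k - {0} \<and> y = depth2_parent k x \<or>
     y \<in> depth2_vertices k - {0} \<and> x = depth2_parent k y"
  unfolding adj_def depth2_edges_def by (auto simp: doubleton_eq_iff)

lemma depth2_vertices_0: "0 < k \<Longrightarrow> 0 \<in> depth2_vertices k"
  unfolding depth2_vertices_def by simp

lemma depth2_vertices_child: "v \<in> {1..<k} \<Longrightarrow> v \<in> depth2_vertices k"
  unfolding depth2_vertices_def by simp

lemma depth2_parent_mem:
  "v \<in> depth2_vertices k - {0} \<Longrightarrow> depth2_parent k v \<in> depth2_vertices k"
  using depth2_parent_child[of v k] depth2_vertices_0 depth2_vertices_child by fastforce

lemma graph_depth2: "graph (depth2_vertices k) (depth2_edges k)"
  unfolding graph_def depth2_edges_def
proof
  fix e assume "e \<in> (\<lambda>v. {v, depth2_parent k v}) ` (depth2_vertices k - {0})"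
  then obtain v where v: "v \<in> depth2_vertices k - {0}" "e = {v, depth2_parent k v}" by blast
  then have "v \<noteq> depth2_parent k v" using depth2_parent_child[OF v(1)] by auto
  with v depth2_parent_mem
  show "\<exists>u w. u \<noteq> w \<and> u \<in> depth2_vertices k \<and> w \<in> depth2_vertices k \<and> e = {u, w}"
    by blast
qed

lemma adj_depth2_parent:
  "v \<in> depth2_vertices k - {0} \<Longrightarrow> adj (depth2_edges k) v (depth2_parent k v)"
  by (simp add: adj_depth2_iff)

lemma adj_depth2_root: "j \<in> {1..<k} \<Longrightarrow> adj (depth2_edges k) j 0"
  using adj_depth2_parent[of j k] depth2_vertices_child[of j k] by (simp add: depth2_parent_def)

lemma dist_le_depth2_root:
  assumes v: "v \<in> depth2_vertices k"
  shows "dist_le (depth2_vertices k) (depth2_edges k) v 0 2"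
proof -
  have root: "0 \<in> depth2_vertices k" using v unfolding depth2_vertices_def by auto
  from v show ?thesis
  proof (cases rule: depth2_vertices_cases)
    case 1
    then show ?thesis using dist_le_mono[OF dist_le_refl[OF root]] by simp
  next
    case 2
    then have "dist_le (depth2_vertices k) (depth2_edges k) v 0 1"
      using dist_le_adj[OF v root adj_depth2_root] by simp
    then show ?thesis by (rule dist_le_mono) simp
  next
    case (3 j i)
    then have "v \<in> depth2_vertices k - {0}" "depth2_parent k v = j"
      using depth2_leaf[OF 3(1,2)] by auto
    then have "adj (depth2_edges k) v j" using adj_depth2_parent by metis
    then show ?thesis
      using dist_le_adj_adj[OF v depth2_vertices_child[OF 3(1)] root _ adj_depth2_root[OF 3(1)]]
      by simp
  qed
qed

lemma finite_depth2_vertices: "finite (depth2_vertices k)"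
  unfolding depth2_vertices_def
  by (intro finite_UnI finite_lessThan finite_image_set2) (simp_all add: Collect_mem_eq)

lemma acyclic_depth2: "acyclic_graph (depth2_vertices k) (depth2_edges k)"
proof (rule acyclic_graph_if_parent)
  fix x y
  let ?height = "\<lambda>v. if v = 0 then 0 else if v < k then 1 else 2 :: nat"
  have *: "?height (depth2_parent k v) < ?height v" if "v \<in> depth2_vertices k - {0}" for v
    using depth2_parent_child[OF that] by auto
  assume "adj (depth2_edges k) x y" "?height y \<le> ?height x"
  then show "y = depth2_parent k x" using *[of y] by (auto simp: adj_depth2_iff)
qed

lemma tree_depth2:
  assumes "2 \<le> k"
  shows "tree (depth2_vertices k) (depth2_edges k)"
proof -
  have "connected_graph (depth2_vertices k) (depth2_edges k)"
    unfolding connected_graph_def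
    using dist_le_trans[OF dist_le_depth2_root dist_le_sym[OF dist_le_depth2_root]] by blast
  moreover have "depth2_vertices k \<noteq> {}" using depth2_vertices_0[of k] assms by auto
  ultimately show ?thesis
    unfolding tree_def using graph_depth2 finite_depth2_vertices acyclic_depth2 by blast
qed

lemma packing_coloring_depth2:
  assumes "2 \<le> k"
  shows "packing_coloring (depth2_vertices k) (depth2_edges k) k
           (\<lambda>v. if v \<in> {1..<k} then v + 1 else 1)" (is "packing_coloring ?V ?E k ?c")
  unfolding packing_coloring_def
proof (intro conjI ballI impI notI)
  fix v
  show "?c v \<in> {1..k}" using assms by (cases "v \<in> {1..<k}") auto
next
  fix u v assume "u \<in> ?V" "v \<in> ?V" and uv: "u \<noteq> v \<and> ?c u = ?c v"
    and dist: "dist_le ?V ?E u v (?c u)"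
  have leaves: "u \<notin> {1..<k} \<and> v \<notin> {1..<k}"
    using uv by (cases "u \<in> {1..<k}"; cases "v \<in> {1..<k}") auto
  then have "?c u = 1" by simp
  then have "dist_le ?V ?E u v 1" using dist by simp
  then have "adj ?E u v" using dist_le_1D uv by metis
  then consider "u \<in> ?V - {0}" "v = depth2_parent k u" | "v \<in> ?V - {0}" "u = depth2_parent k v"
    by (auto simp: adj_depth2_iff)
  then show False
  proof cases
    case 1
    then show False using depth2_parent_child[OF 1(1)] leaves by simp
  next
    case 2
    then show False using depth2_parent_child[OF 2(1)] leaves by simp
  qed
qed

lemma packing_coloring_depth2_ge:
  assumes "2 \<le> k" and c: "packing_coloring (depth2_vertices k) (depth2_edges k) K c"
  shows "k \<le> K"
proof (cases "\<exists>j\<in>{1..<k}. c j = 1")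
  case True
  then obtain j where j: "j \<in> {1..<k}" "c j = 1" by blast
  define S where "S = (\<lambda>i. j * k + i) ` {..<k - 1}"
  have "card S = k - 1" unfolding S_def by (simp add: card_image inj_on_def)
  moreover have "S \<subseteq> depth2_vertices k" using depth2_leaf j unfolding S_def by blast
  moreover have "\<forall>x\<in>S. adj (depth2_edges k) x j \<and> c x \<noteq> 1"
  proof
    fix x assume "x \<in> S"
    then obtain i where i: "i < k - 1" "x = j * k + i" unfolding S_def by blast
    then have "x \<in> depth2_vertices k - {0}" "depth2_parent k x = j" "x \<noteq> j"
      using depth2_leaf[OF j(1) i(1)] j(1) by auto
    then have "adj (depth2_edges k) x j" using adj_depth2_parent by metis
    moreover have "c x \<noteq> 1"
      using packing_coloring_adj_colour_1[OF c _ depth2_vertices_child[OF j(1)]]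
        \<open>adj (depth2_edges k) x j\<close> \<open>x \<noteq> j\<close> \<open>x \<in> depth2_vertices k - {0}\<close> j(2)
      by blast
    ultimately show "adj (depth2_edges k) x j \<and> c x \<noteq> 1" by blast
  qed
  ultimately have "k - 1 \<le> K - 1"
    using packing_coloring_card_neighbours_le[OF c] depth2_vertices_child[OF j(1)] by metis
  then show ?thesis using assms by linarith
next
  case False
  have "\<forall>x\<in>{1..<k}. adj (depth2_edges k) x 0 \<and> c x \<noteq> 1"
    using False adj_depth2_root by blast
  then have "card {1..<k} \<le> K - 1"
    using packing_coloring_card_neighbours_le[OF c] depth2_vertices_0 depth2_vertices_child assms
    by (metis subsetI zero_less_numeral less_le_trans)
  then show ?thesis using assms by simp
qed

lemma packing_chromatic_depth2:
  assumes "2 \<le> k"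
  shows "packing_chromatic (depth2_vertices k) (depth2_edges k) = k"
proof (rule antisym)
  show "packing_chromatic (depth2_vertices k) (depth2_edges k) \<le> k"
    using packing_chromatic_le[OF packing_coloring_depth2[OF assms]] .
  obtain c where "packing_coloring (depth2_vertices k) (depth2_edges k)
      (packing_chromatic (depth2_vertices k) (depth2_edges k)) c"
    using packing_coloring_packing_chromatic tree_depth2[OF assms] unfolding tree_def by blast
  then show "k \<le> packing_chromatic (depth2_vertices k) (depth2_edges k)"
    by (rule packing_coloring_depth2_ge[OF assms])
qed

theorem corollary3p6:
  fixes k :: nat
  assumes "k \<ge> 2"
  shows "\<exists>(V :: nat set) E. tree V E \<and> packing_critical V E \<and> packing_chromatic V E = k"
proof -
  have T: "tree (depth2_vertices k) (depth2_edges k)" by (rule tree_depth2[OF assms])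
  then obtain V E where sub: "subgraph V E (depth2_vertices k) (depth2_edges k)"
    and crit: "packing_critical V E" and chi: "packing_chromatic V E = k"
    using exists_packing_critical_subgraph packing_chromatic_depth2[OF assms]
    unfolding tree_def by metis
  have "V \<noteq> {}"
  proof
    assume "V = {}"
    then show False using chi assms by (simp add: packing_chromatic_empty)
  qed
  then have "tree V E" by (rule tree_packing_critical_subgraph[OF T sub crit])
  then show ?thesis using crit chi by blast
qed

end
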